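(* Let $n\ge3$ and suppose $T=T_\lambda(r,m)$ acts linearly and inner faithfully on $\Bbbk\overline{Q}$, where $g$ acts either as a rotation ($g\cdot e_i=e_{i+d}$, $g\cdot a_i=\mu_ia_{i+d}$, $g\cdot a_i^*=\mu_i^*a^*_{i+d}$) or as a reflection ($g\cdot e_i=e_{n-(d+i)}$, $g\cdot a_i=\mu_ia^*_{n-(d+i+1)}$, $g\cdot a_i^*=\mu_i^*a_{n-(d+i+1)}$), with $0\le d\le n-1$ and $\mu_i,\mu_i^*\in\Bbbk^\times$. Then the action descends to an action on $\Pi_Q$ if and only if for all $i$ $$\mu_i\mu_i^*-\mu_{i+1}\mu_{i+1}^*=0$$ and $$a_i^*\sigma(a_i)+\sigma(a_i^* )(g\cdot a_i)-a_{i+1}\sigma(a_{i+1}^* )-\sigma(a_{i+1})(g\cdot a_{i+1}^* )=0 \quad\text{in }\Pi_Q.$$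
   Context: Let $\Bbbk$ be a field, $r>1$ and $m$ positive integers with $r\mid m$, and $\lambda\in\Bbbk$ a primitive $r$-th root of unity, with $r$ coprime to the characteristic of $\Bbbk$. The generalized Taft algebra $T=T_\lambda(r,m)$ is the Hopf algebra generated by $g,x$ with relations $gx=\lambda xg$, $g^m=1$, $x^r=0$, $\Delta(g)=g\otimes g$, $\Delta(x)=1\otimes x+x\otimes g$, $\varepsilon(g)=1,\varepsilon(x)=0$, $S(g)=g^{-1}$, $S(x)=-xg^{-1}$. An action of $T$ on an algebra $A$ is a $T$-module algebra structure; so $g$ acts by an algebra automorphism and $x\cdot(ab)=a(x\cdot b)+(x\cdot a)(g\cdot b)$. It is inner faithful if no nonzero Hopf ideal $I$ of $T$ satisfies $I\cdot A=0$. Vertex indices are taken modulo $n$. $\overline{Q}$ has vertices $0,\dots,n-1$ and arrows $a_i:i\to i+1$, $a_i^*:i+1\to i$; in $\Bbbk\overline{Q}$, $e_i$ is the trivial path at $i$, $s(a),t(a)$ source and target, and $pq$ is the concatenation ($p$ then $q$) if $t(p)=s(q)$, else $0$. $\Pi_Q=\Bbbk\overline{Q}/(\Omega)$, $(\Omega)$ the ideal generated by $a_i^*a_i-a_{i+1}a_{i+1}^*$. The action descends to $\Pi_Q$ if $(\Omega)$ is stable under $g$ and $x$. A linear action: $g$ acts by a path-length-preserving automorphism ($g\cdot e_i=e_{g\cdot i}$) and $x$ maps vertices into the span of vertices and arrows into the span of vertices and arrows. Then there are scalars $\gamma_i$ with $x\cdot e_i=\gamma_ie_i-\gamma_i\lambda^{-1}e_{g\cdot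 i}$; the quiver-Taft map $\sigma$ is the linear map on the span of vertices and arrows with $\sigma(e_i)=0$ and $\sigma(a)=x\cdot a-\gamma_{t(a)}a+\gamma_{s(a)}\lambda^{-1}(g\cdot a)$ for arrows $a$. *)

theory Defs
  imports Main
begin

inductive_set lspan :: "('a \<Rightarrow> 'k::field) set \<Rightarrow> ('a \<Rightarrow> 'k) set" for S where
  lspan_zero: "(\<lambda>_. 0) \<in> lspan S"
| lspan_step: "s \<in> S \<Longrightarrow> v \<in> lspan S \<Longrightarrow> (\<lambda>p. c * s p + v p) \<in> lspan S"

definition fbasis :: "'a \<Rightarrow> 'a \<Rightarrow> 'k::field" where
  "fbasis x = (\<lambda>y. if y = x then 1 else 0)"

text \<open>Ar i is the arrow a_i : i -> i+1, As i is the arrow a_i^* : i+1 -> i (indices mod n).\<close>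
datatype arr = Ar nat | As nat

fun aidx :: "arr \<Rightarrow> nat" where
  "aidx (Ar i) = i" | "aidx (As i) = i"

fun asrc :: "nat \<Rightarrow> arr \<Rightarrow> nat" where
  "asrc n (Ar i) = i" | "asrc n (As i) = (i + 1) mod n"

fun atgt :: "nat \<Rightarrow> arr \<Rightarrow> nat" where
  "atgt n (Ar i) = (i + 1) mod n" | "atgt n (As i) = i"

text \<open>A path is a start vertex together with a list of composable arrows
  (the empty list is the trivial path e_v).\<close>
type_synonym path = "nat \<times> arr list"

fun pvalid :: "nat \<Rightarrow> nat \<Rightarrow> arr list \<Rightarrow> bool" where
  "pvalid n v [] = (v < n)"
| "pvalid n v (a # as) = (v < n \<and> aidx a < n \<and> asrc n a = v \<and> pvalid n (atgt n a) as)"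

fun pend :: "nat \<Rightarrow> nat \<Rightarrow> arr list \<Rightarrow> nat" where
  "pend n v [] = v"
| "pend n v (a # as) = pend n (atgt n a) as"

definition PA :: "nat \<Rightarrow> (path \<Rightarrow> 'k::field) set" where
  "PA n = {f. finite {p. f p \<noteq> 0} \<and> (\<forall>p. f p \<noteq> 0 \<longrightarrow> pvalid n (fst p) (snd p))}"

text \<open>Multiplication: concatenation of paths (p then q), extended bilinearly.\<close>
definition pmult :: "nat \<Rightarrow> (path \<Rightarrow> 'k::field) \<Rightarrow> (path \<Rightarrow> 'k) \<Rightarrow> (path \<Rightarrow> 'k)" where
  "pmult n f h = (\<lambda>(v, as). if pvalid n v as then
      (\<Sum>k\<in>{0..length as}. f (v, take k as) * h (pend n v (take k as), drop k as)) else 0)"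

definition pone :: "nat \<Rightarrow> path \<Rightarrow> 'k::field" where
  "pone n = (\<lambda>(v, as). if as = [] \<and> v < n then 1 else 0)"

definition padd :: "(path \<Rightarrow> 'k::field) \<Rightarrow> (path \<Rightarrow> 'k) \<Rightarrow> (path \<Rightarrow> 'k)" where
  "padd f h = (\<lambda>p. f p + h p)"

definition psub :: "(path \<Rightarrow> 'k::field) \<Rightarrow> (path \<Rightarrow> 'k) \<Rightarrow> (path \<Rightarrow> 'k)" where
  "psub f h = (\<lambda>p. f p - h p)"

definition psmult :: "'k::field \<Rightarrow> (path \<Rightarrow> 'k) \<Rightarrow> (path \<Rightarrow> 'k)" where
  "psmult c f = (\<lambda>p. c * f p)"

definition vert :: "nat \<Rightarrow> path \<Rightarrow> 'k::field" where
  "vert i = fbasis (i, [])"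

definition arrow :: "nat \<Rightarrow> arr \<Rightarrow> path \<Rightarrow> 'k::field" where
  "arrow n a = fbasis (asrc n a, [a])"

definition omega :: "nat \<Rightarrow> nat \<Rightarrow> path \<Rightarrow> 'k::field" where
  "omega n i = psub (pmult n (arrow n (As i)) (arrow n (Ar i)))
                    (pmult n (arrow n (Ar ((i + 1) mod n))) (arrow n (As ((i + 1) mod n))))"

definition OmegaIdeal :: "nat \<Rightarrow> (path \<Rightarrow> 'k::field) set" where
  "OmegaIdeal n = lspan {pmult n (pmult n (fbasis p) (omega n i)) (fbasis q) | p q i.
      pvalid n (fst p) (snd p) \<and> pvalid n (fst q) (snd q) \<and> i < n}"

text \<open>G and X are the actions of the generators g and x.  The module-algebra axioms
  on generators together with the defining relations of T.\<close>
definition taft_module_algebra ::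
  "nat \<Rightarrow> 'k::field \<Rightarrow> nat \<Rightarrow> nat \<Rightarrow> ((path \<Rightarrow> 'k) \<Rightarrow> (path \<Rightarrow> 'k)) \<Rightarrow> ((path \<Rightarrow> 'k) \<Rightarrow> (path \<Rightarrow> 'k)) \<Rightarrow> bool"
  where
  "taft_module_algebra n lam r m G X \<longleftrightarrow>
     (\<forall>a\<in>PA n. G a \<in> PA n \<and> X a \<in> PA n) \<and>
     (\<forall>a\<in>PA n. \<forall>b\<in>PA n. G (padd a b) = padd (G a) (G b) \<and> X (padd a b) = padd (X a) (X b)) \<and>
     (\<forall>a\<in>PA n. \<forall>c. G (psmult c a) = psmult c (G a) \<and> X (psmult c a) = psmult c (X a)) \<and>
     (\<forall>a\<in>PA n. \<forall>b\<in>PA n. G (pmult n a b) = pmult n (G a) (G b)) \<and>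
     G (pone n) = pone n \<and>
     (\<forall>a\<in>PA n. \<forall>b\<in>PA n. X (pmult n a b) = padd (pmult n a (X b)) (pmult n (X a) (G b))) \<and>
     X (pone n) = (\<lambda>_. 0) \<and>
     (\<forall>a\<in>PA n. (G ^^ m) a = a) \<and>
     (\<forall>a\<in>PA n. (X ^^ r) a = (\<lambda>_. 0)) \<and>
     (\<forall>a\<in>PA n. G (X a) = psmult lam (X (G a)))"

section \<open>The Hopf algebra T_lambda(r,m), with basis g^a x^b (a < m, b < r)\<close>

type_synonym tidx = "nat \<times> nat"

definition TI :: "nat \<Rightarrow> nat \<Rightarrow> tidx set" where
  "TI r m = {..<m} \<times> {..<r}"

definition Tcarrier :: "nat \<Rightarrow> nat \<Rightarrow> (tidx \<Rightarrow> 'k::field) set" where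
  "Tcarrier r m = {h. \<forall>p. h p \<noteq> 0 \<longrightarrow> p \<in> TI r m}"

text \<open>Structure constants: (g^a x^b)(g^c x^d) = lambda^{-bc} g^{a+c} x^{b+d}.\<close>
definition tsc :: "'k::field \<Rightarrow> nat \<Rightarrow> nat \<Rightarrow> tidx \<Rightarrow> tidx \<Rightarrow> tidx \<Rightarrow> 'k" where
  "tsc lam r m p1 p2 p = (case (p1, p2, p) of ((a, b), (c, d), (i, j)) \<Rightarrow>
      if i = (a + c) mod m \<and> j = b + d \<and> j < r then (inverse lam) ^ (b * c) else 0)"

definition tmult :: "'k::field \<Rightarrow> nat \<Rightarrow> nat \<Rightarrow> (tidx \<Rightarrow> 'k) \<Rightarrow> (tidx \<Rightarrow> 'k) \<Rightarrow> (tidx \<Rightarrow> 'k)" where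
  "tmult lam r m f h = (\<lambda>p. \<Sum>p1\<in>TI r m. \<Sum>p2\<in>TI r m. f p1 * h p2 * tsc lam r m p1 p2 p)"

definition ttmult :: "'k::field \<Rightarrow> nat \<Rightarrow> nat \<Rightarrow> (tidx \<times> tidx \<Rightarrow> 'k) \<Rightarrow> (tidx \<times> tidx \<Rightarrow> 'k) \<Rightarrow> (tidx \<times> tidx \<Rightarrow> 'k)" where
  "ttmult lam r m F H = (\<lambda>(p, q). \<Sum>u\<in>TI r m \<times> TI r m. \<Sum>w\<in>TI r m \<times> TI r m.
      F u * H w * tsc lam r m (fst u) (fst w) p * tsc lam r m (snd u) (snd w) q)"

definition tensor :: "(tidx \<Rightarrow> 'k::field) \<Rightarrow> (tidx \<Rightarrow> 'k) \<Rightarrow> (tidx \<times> tidx \<Rightarrow> 'k)" where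
  "tensor u v = (\<lambda>(p, q). u p * v q)"

definition tone :: "tidx \<Rightarrow> 'k::field" where "tone = fbasis (0, 0)"
definition tg :: "nat \<Rightarrow> tidx \<Rightarrow> 'k::field" where "tg m = fbasis (1 mod m, 0)"
definition tx :: "tidx \<Rightarrow> 'k::field" where "tx = fbasis (0, 1)"
definition tginv :: "nat \<Rightarrow> tidx \<Rightarrow> 'k::field" where "tginv m = fbasis (m - 1, 0)"

definition tbasis :: "tidx \<Rightarrow> tidx \<Rightarrow> 'k::field" where "tbasis p = fbasis p"

text \<open>Comultiplication: the algebra map with g |-> g (x) g and x |-> 1 (x) x + x (x) g.\<close>
definition tDelta_g :: "nat \<Rightarrow> tidx \<times> tidx \<Rightarrow> 'k::field" where
  "tDelta_g m = tensor (tg m) (tg m)"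

definition tDelta_x :: "nat \<Rightarrow> tidx \<times> tidx \<Rightarrow> 'k::field" where
  "tDelta_x m = (\<lambda>z. tensor tone tx z + tensor tx (tg m) z)"

definition tDelta :: "'k::field \<Rightarrow> nat \<Rightarrow> nat \<Rightarrow> (tidx \<Rightarrow> 'k) \<Rightarrow> (tidx \<times> tidx \<Rightarrow> 'k)" where
  "tDelta lam r m h = (\<lambda>z. \<Sum>(a, b)\<in>TI r m. h (a, b) *
      ttmult lam r m ((ttmult lam r m (tDelta_g m) ^^ a) (tensor tone tone))
                     ((ttmult lam r m (tDelta_x m) ^^ b) (tensor tone tone)) z)"

definition teps :: "nat \<Rightarrow> nat \<Rightarrow> (tidx \<Rightarrow> 'k::field) \<Rightarrow> 'k" where
  "teps r m h = (\<Sum>a<m. h (a, 0))"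

text \<open>Antipode: S(g^a x^b) = S(x)^b S(g)^a with S(g) = g^{-1}, S(x) = - x g^{-1}.\<close>
definition tSx :: "'k::field \<Rightarrow> nat \<Rightarrow> nat \<Rightarrow> tidx \<Rightarrow> 'k" where
  "tSx lam r m = (\<lambda>p. - tmult lam r m tx (tginv m) p)"

definition tS :: "'k::field \<Rightarrow> nat \<Rightarrow> nat \<Rightarrow> (tidx \<Rightarrow> 'k) \<Rightarrow> (tidx \<Rightarrow> 'k)" where
  "tS lam r m h = (\<lambda>p. \<Sum>(a, b)\<in>TI r m. h (a, b) *
      tmult lam r m ((tmult lam r m (tSx lam r m) ^^ b) tone)
                    ((tmult lam r m (tginv m) ^^ a) tone) p)"

definition hopf_ideal :: "'k::field \<Rightarrow> nat \<Rightarrow> nat \<Rightarrow> (tidx \<Rightarrow> 'k) set \<Rightarrow> bool" where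
  "hopf_ideal lam r m I \<longleftrightarrow>
     I \<subseteq> Tcarrier r m \<and> (\<lambda>_. 0) \<in> I \<and>
     (\<forall>h\<in>I. \<forall>h'\<in>I. (\<lambda>p. h p + h' p) \<in> I) \<and>
     (\<forall>h\<in>I. \<forall>c. (\<lambda>p. c * h p) \<in> I) \<and>
     (\<forall>h\<in>I. \<forall>t\<in>Tcarrier r m. tmult lam r m t h \<in> I \<and> tmult lam r m h t \<in> I) \<and>
     (\<forall>h\<in>I. tDelta lam r m h \<in>
        lspan {tensor u v | u v. (u \<in> I \<and> v \<in> Tcarrier r m) \<or> (u \<in> Tcarrier r m \<and> v \<in> I)}) \<and>
     (\<forall>h\<in>I. teps r m h = 0) \<and>
     (\<forall>h\<in>I. tS lam r m h \<in> I)"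

definition tact :: "nat \<Rightarrow> nat \<Rightarrow> ((path \<Rightarrow> 'k::field) \<Rightarrow> (path \<Rightarrow> 'k)) \<Rightarrow> ((path \<Rightarrow> 'k) \<Rightarrow> (path \<Rightarrow> 'k))
    \<Rightarrow> (tidx \<Rightarrow> 'k) \<Rightarrow> (path \<Rightarrow> 'k) \<Rightarrow> (path \<Rightarrow> 'k)" where
  "tact r m G X h f = (\<lambda>p. \<Sum>(a, b)\<in>TI r m. h (a, b) * (G ^^ a) ((X ^^ b) f) p)"

definition inner_faithful ::
  "nat \<Rightarrow> 'k::field \<Rightarrow> nat \<Rightarrow> nat \<Rightarrow> ((path \<Rightarrow> 'k) \<Rightarrow> (path \<Rightarrow> 'k)) \<Rightarrow> ((path \<Rightarrow> 'k) \<Rightarrow> (path \<Rightarrow> 'k)) \<Rightarrow> bool"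
  where
  "inner_faithful n lam r m G X \<longleftrightarrow>
     \<not> (\<exists>I. hopf_ideal lam r m I \<and> (\<exists>h\<in>I. h \<noteq> (\<lambda>_. 0)) \<and>
            (\<forall>h\<in>I. \<forall>f\<in>PA n. tact r m G X h f = (\<lambda>_. 0)))"

definition x_linear :: "nat \<Rightarrow> ((path \<Rightarrow> 'k::field) \<Rightarrow> (path \<Rightarrow> 'k)) \<Rightarrow> bool" where
  "x_linear n X \<longleftrightarrow>
     (\<forall>i<n. X (vert i) \<in> lspan (fbasis ` {p. pvalid n (fst p) (snd p) \<and> snd p = []})) \<and>
     (\<forall>a. aidx a < n \<longrightarrow>
        X (arrow n a) \<in> lspan (fbasis ` {p. pvalid n (fst p) (snd p) \<and> length (snd p) \<le> 1}))"

definition g_rotation ::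
  "nat \<Rightarrow> nat \<Rightarrow> (nat \<Rightarrow> 'k::field) \<Rightarrow> (nat \<Rightarrow> 'k) \<Rightarrow> ((path \<Rightarrow> 'k) \<Rightarrow> (path \<Rightarrow> 'k)) \<Rightarrow> bool" where
  "g_rotation n d mu mus G \<longleftrightarrow>
     (\<forall>i<n. G (vert i) = vert ((i + d) mod n) \<and>
            G (arrow n (Ar i)) = psmult (mu i) (arrow n (Ar ((i + d) mod n))) \<and>
            G (arrow n (As i)) = psmult (mus i) (arrow n (As ((i + d) mod n))))"

definition g_reflection ::
  "nat \<Rightarrow> nat \<Rightarrow> (nat \<Rightarrow> 'k::field) \<Rightarrow> (nat \<Rightarrow> 'k) \<Rightarrow> ((path \<Rightarrow> 'k) \<Rightarrow> (path \<Rightarrow> 'k)) \<Rightarrow> bool" where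
  "g_reflection n d mu mus G \<longleftrightarrow>
     (\<forall>i<n. G (vert i) = vert ((2 * n - (d + i)) mod n) \<and>
            G (arrow n (Ar i)) = psmult (mu i) (arrow n (As ((2 * n - (d + i + 1)) mod n))) \<and>
            G (arrow n (As i)) = psmult (mus i) (arrow n (Ar ((2 * n - (d + i + 1)) mod n))))"

text \<open>The scalars gamma_i with x.e_i = gamma_i e_i - gamma_i lambda^{-1} e_{g.i}
  (they exist and are unique for a linear action).\<close>
definition gammas :: "nat \<Rightarrow> 'k::field \<Rightarrow> ((path \<Rightarrow> 'k) \<Rightarrow> (path \<Rightarrow> 'k)) \<Rightarrow> ((path \<Rightarrow> 'k) \<Rightarrow> (path \<Rightarrow> 'k)) \<Rightarrow> nat \<Rightarrow> 'k"
  where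
  "gammas n lam G X = (SOME \<gamma>. \<forall>i<n.
      X (vert i) = (\<lambda>p. \<gamma> i * vert i p - \<gamma> i * inverse lam * G (vert i) p))"

definition qsigma :: "nat \<Rightarrow> 'k::field \<Rightarrow> ((path \<Rightarrow> 'k) \<Rightarrow> (path \<Rightarrow> 'k)) \<Rightarrow> ((path \<Rightarrow> 'k) \<Rightarrow> (path \<Rightarrow> 'k))
    \<Rightarrow> arr \<Rightarrow> (path \<Rightarrow> 'k)" where
  "qsigma n lam G X a = (\<lambda>p. X (arrow n a) p
      - gammas n lam G X (atgt n a) * arrow n a p
      + gammas n lam G X (asrc n a) * inverse lam * G (arrow n a) p)"

definition descends :: "nat \<Rightarrow> ((path \<Rightarrow> 'k::field) \<Rightarrow> (path \<Rightarrow> 'k)) \<Rightarrow> ((path \<Rightarrow> 'k) \<Rightarrow> (path \<Rightarrow> 'k)) \<Rightarrow> bool" where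
  "descends n G X \<longleftrightarrow> (\<forall>w\<in>OmegaIdeal n. G w \<in> OmegaIdeal n \<and> X w \<in> OmegaIdeal n)"

end

theory Submission
  imports Defs "HOL-Number_Theory.Cong"
begin

(* The ideal (Omega) is stable under g and x as soon as it contains g.omega_i and x.omega_i for
   every relation omega_i = a_i^* a_i - a_(i+1) a_(i+1)^*, since g is multiplicative and x obeys the
   twisted Leibniz rule. As g permutes the arrows up to the scalars mu i, mus i, g.omega_i is a
   multiple of another relation plus mu i * mus i - mu (i+1) * mus (i+1) times a single 2-cycle
   a_k a_k^*, and such a combination lies in (Omega) only if that coefficient vanishes.
   Writing x.a = sigma(a) + gamma_t(a) a - gamma_s(a) lambda^-1 g.a, the element x.omega_i becomes
   the sigma-expression of the statement plus gamma_(i+1) (omega_i - lambda^-1 g.omega_i), which lies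
   in (Omega) once g.omega_i does; the cross terms gamma_v (1 - lambda^-1) a (g.b) cancel because
   x.e_v = x.(e_v e_v). *)

lemma lspan_base: "s \<in> S \<Longrightarrow> s \<in> lspan S"
  using lspan.lspan_step[OF _ lspan.lspan_zero, of s S 1] by simp

lemma lspan_add: "f \<in> lspan S \<Longrightarrow> g \<in> lspan S \<Longrightarrow> (\<lambda>p. f p + g p) \<in> lspan S"
proof (induction f rule: lspan.induct)
  case (lspan_step s v c)
  then have "(\<lambda>p. c * s p + (v p + g p)) \<in> lspan S"
    by (simp add: lspan.lspan_step)
  then show ?case
    by (simp add: add.assoc)
qed simp

lemma lspan_scale: "f \<in> lspan S \<Longrightarrow> (\<lambda>p. c * f p) \<in> lspan S"
proof (induction f rule: lspan.induct)
  case (lspan_step s v e)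
  then have "(\<lambda>p. (c * e) * s p + c * v p) \<in> lspan S"
    by (simp add: lspan.lspan_step)
  then show ?case
    by (simp add: algebra_simps)
qed (simp add: lspan.lspan_zero)

lemma lspan_diff: "f \<in> lspan S \<Longrightarrow> g \<in> lspan S \<Longrightarrow> (\<lambda>p. f p - g p) \<in> lspan S"
  using lspan_add[OF _ lspan_scale, of f S g "-1"] by simp

section \<open>The path algebra\<close>

lemma pvalid_imp_less: "pvalid n v xs \<Longrightarrow> v < n"
  by (cases xs) auto

lemma pvalid_append: "pvalid n v (xs @ ys) \<longleftrightarrow> pvalid n v xs \<and> pvalid n (pend n v xs) ys"
  by (induction xs arbitrary: v) (auto dest: pvalid_imp_less)

lemma pend_append: "pend n v (xs @ ys) = pend n (pend n v xs) ys"
  by (induction xs arbitrary: v) auto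

lemma pmult_fbasis:
  "pmult n (fbasis (v, xs)) (fbasis (w, ys)) =
    (if pvalid n v xs \<and> pvalid n w ys \<and> pend n v xs = w then fbasis (v, xs @ ys) else (\<lambda>_. 0))"
proof (intro ext, clarify)
  fix u as
  let ?hit = "u = v \<and> as = xs @ ys \<and> pend n v xs = w"
  have split: "take k as = xs \<and> drop k as = ys \<longleftrightarrow> k = length xs \<and> as = xs @ ys"
    if "k \<le> length as" for k
    using that by (metis append_take_drop_id append_eq_conv_conj length_take min.absorb2)
  have summand: "fbasis (v, xs) (u, take k as) * fbasis (w, ys) (pend n u (take k as), drop k as)
      = (if k = length xs then (if ?hit then 1 else 0) else 0)" if "k \<in> {0..length as}" for k
  proof -
    have k: "k \<le> length as"
      using that by simp
    have "fbasis (v, xs) (u, take k as) * fbasis (w, ys) (pend n u (take k as), drop k as)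
        = (if u = v \<and> (take k as = xs \<and> drop k as = ys) \<and> pend n u (take k as) = w then 1 else 0)"
      by (auto simp: fbasis_def)
    also have "\<dots> = (if k = length xs then (if ?hit then 1 else 0) else 0)"
      unfolding split[OF k] by auto
    finally show ?thesis .
  qed
  show "pmult n (fbasis (v, xs)) (fbasis (w, ys)) (u, as) =
    (if pvalid n v xs \<and> pvalid n w ys \<and> pend n v xs = w then fbasis (v, xs @ ys) else (\<lambda>_. 0)) (u, as)"
  proof (cases "pvalid n u as")
    case True
    then have "pmult n (fbasis (v, xs)) (fbasis (w, ys)) (u, as) = (\<Sum>k\<in>{0..length as}.
        fbasis (v, xs) (u, take k as) * fbasis (w, ys) (pend n u (take k as), drop k as))"
      by (simp add: pmult_def)
    also have "\<dots> = (\<Sum>k\<in>{0..length as}. if k = length xs then (if ?hit then 1 else 0) else 0)"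
      by (rule sum.cong[OF refl summand])
    also have "\<dots> = (if ?hit then 1 else 0)"
      by (simp add: sum.delta)
    finally show ?thesis
      using True by (auto simp: fbasis_def pvalid_append)
  qed (auto simp: pmult_def fbasis_def pvalid_append)
qed

lemma pmult_fbasis_pair:
  "pmult n (fbasis x) (fbasis y) =
    (if pvalid n (fst x) (snd x) \<and> pvalid n (fst y) (snd y) \<and> pend n (fst x) (snd x) = fst y
     then fbasis (fst x, snd x @ snd y) else (\<lambda>_. 0))"
  using pmult_fbasis[of n "fst x" "snd x" "fst y" "snd y"] by simp

lemma pmult_zero_left [simp]: "pmult n (\<lambda>_. 0) h = (\<lambda>_. 0)"
  by (auto simp: pmult_def)

lemma pmult_zero_right [simp]: "pmult n h (\<lambda>_. 0) = (\<lambda>_. 0)"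
  by (auto simp: pmult_def)

lemma pmult_add_left: "pmult n (\<lambda>p. f p + g p) h = (\<lambda>p. pmult n f h p + pmult n g h p)"
  by (auto simp: pmult_def sum.distrib algebra_simps)

lemma pmult_add_right: "pmult n h (\<lambda>p. f p + g p) = (\<lambda>p. pmult n h f p + pmult n h g p)"
  by (auto simp: pmult_def sum.distrib algebra_simps)

lemma pmult_diff_left: "pmult n (\<lambda>p. f p - g p) h = (\<lambda>p. pmult n f h p - pmult n g h p)"
  by (auto simp: pmult_def sum_subtractf algebra_simps)

lemma pmult_diff_right: "pmult n h (\<lambda>p. f p - g p) = (\<lambda>p. pmult n h f p - pmult n h g p)"
  by (auto simp: pmult_def sum_subtractf algebra_simps)

lemma pmult_scale_left: "pmult n (\<lambda>p. c * f p) h = (\<lambda>p. c * pmult n f h p)"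
  by (auto simp: pmult_def sum_distrib_left algebra_simps)

lemma pmult_scale_right: "pmult n h (\<lambda>p. c * f p) = (\<lambda>p. c * pmult n h f p)"
  by (auto simp: pmult_def sum_distrib_left algebra_simps)

lemma pmult_psmult: "pmult n (psmult a f) (psmult b g) = (\<lambda>p. a * (b * pmult n f g p))"
  unfolding psmult_def pmult_scale_left pmult_scale_right ..

definition path_basis :: "nat \<Rightarrow> (path \<Rightarrow> 'k::field) set" where
  "path_basis n = fbasis ` {p. pvalid n (fst p) (snd p)}"

lemma fbasis_in_PA: "pvalid n (fst x) (snd x) \<Longrightarrow> fbasis x \<in> PA n"
  by (auto simp: PA_def fbasis_def)

lemma zero_in_PA: "(\<lambda>_. 0) \<in> PA n"
  by (auto simp: PA_def)

lemma PA_lincomb: "f \<in> PA n \<Longrightarrow> g \<in> PA n \<Longrightarrow> (\<lambda>p. c * f p + g p) \<in> PA n"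
proof -
  assume f: "f \<in> PA n" and g: "g \<in> PA n"
  have "{p. c * f p + g p \<noteq> 0} \<subseteq> {p. f p \<noteq> 0} \<union> {p. g p \<noteq> 0}"
    by auto
  then show ?thesis
    using f g unfolding PA_def by (auto intro: finite_subset)
qed

lemma PA_scale: "f \<in> PA n \<Longrightarrow> (\<lambda>p. c * f p) \<in> PA n"
  using PA_lincomb[OF _ zero_in_PA, of f n c] by simp

lemma PA_diff: "f \<in> PA n \<Longrightarrow> g \<in> PA n \<Longrightarrow> (\<lambda>p. f p - g p) \<in> PA n"
  using PA_lincomb[of g n f "-1"] by simp

lemma finite_support_in_lspan_path_basis:
  assumes "finite A" "{p. f p \<noteq> 0} \<subseteq> A" "\<forall>p\<in>A. pvalid n (fst p) (snd p)"
  shows "f \<in> lspan (path_basis n)"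
  using assms
proof (induction A arbitrary: f rule: finite_induct)
  case empty
  then have "f = (\<lambda>_. 0)"
    by auto
  then show ?case
    by (simp add: lspan.lspan_zero)
next
  case (insert x A)
  have "f(x := 0) \<in> lspan (path_basis n)"
    using insert by (intro insert.IH) auto
  moreover have "fbasis x \<in> path_basis n"
    using insert by (auto simp: path_basis_def)
  ultimately have "(\<lambda>p. f x * fbasis x p + (f(x := 0)) p) \<in> lspan (path_basis n)"
    by (rule lspan.lspan_step[rotated])
  moreover have "(\<lambda>p. f x * fbasis x p + (f(x := 0)) p) = f"
    by (auto simp: fbasis_def)
  ultimately show ?case
    by simp
qed

lemma PA_eq_lspan: "PA n = lspan (path_basis n)"
proof (intro set_eqI iffI)
  fix f :: "path \<Rightarrow> 'k::field"
  assume "f \<in> PA n"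
  then show "f \<in> lspan (path_basis n)"
    by (intro finite_support_in_lspan_path_basis[of "{p. f p \<noteq> 0}"]) (auto simp: PA_def)
next
  fix f :: "path \<Rightarrow> 'k::field"
  assume "f \<in> lspan (path_basis n)"
  then show "f \<in> PA n"
    by induction (auto simp: path_basis_def intro: zero_in_PA PA_lincomb fbasis_in_PA)
qed

lemma pmult_in_lspan_path_basis:
  assumes "f \<in> lspan (path_basis n)" "g \<in> lspan (path_basis n)"
  shows "pmult n f g \<in> lspan (path_basis n)"
  using assms
proof (induction f rule: lspan.induct)
  case (lspan_step s v c)
  from \<open>s \<in> path_basis n\<close> obtain x where s: "s = fbasis x" "pvalid n (fst x) (snd x)"
    by (auto simp: path_basis_def)
  have "pmult n s g \<in> lspan (path_basis n)"
    using lspan_step.prems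
  proof (induction g rule: lspan.induct)
    case (lspan_step t w e)
    from \<open>t \<in> path_basis n\<close> obtain y where t: "t = fbasis y" "pvalid n (fst y) (snd y)"
      by (auto simp: path_basis_def)
    have "pmult n s t \<in> lspan (path_basis n)"
      using s t by (auto simp: pmult_fbasis_pair pvalid_append path_basis_def
          intro: lspan_base lspan.lspan_zero)
    then show ?case
      using lspan_step by (simp add: pmult_add_right pmult_scale_right lspan_add lspan_scale)
  qed (simp add: lspan.lspan_zero)
  then show ?case
    using lspan_step by (simp add: pmult_add_left pmult_scale_left lspan_add lspan_scale)
qed (simp add: lspan.lspan_zero)

lemma pmult_in_PA: "f \<in> PA n \<Longrightarrow> g \<in> PA n \<Longrightarrow> pmult n f g \<in> PA n"
  by (simp add: PA_eq_lspan pmult_in_lspan_path_basis)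

lemma pmult_assoc_fbasis:
  "pmult n (pmult n (fbasis x) (fbasis y)) (fbasis z) = pmult n (fbasis x) (pmult n (fbasis y) (fbasis z))"
  by (auto simp: pmult_fbasis_pair pvalid_append pend_append)

lemma pmult_assoc_lspan:
  fixes f g h :: "path \<Rightarrow> 'k::field"
  assumes "f \<in> lspan (path_basis n)" "g \<in> lspan (path_basis n)" "h \<in> lspan (path_basis n)"
  shows "pmult n (pmult n f g) h = pmult n f (pmult n g h)"
proof -
  have basis_right: "pmult n (pmult n f (fbasis y)) (fbasis z) = pmult n f (pmult n (fbasis y) (fbasis z))"
    if "f \<in> lspan (path_basis n)" for f :: "path \<Rightarrow> 'k" and y z
    using that
    by induction (auto simp: path_basis_def pmult_add_left pmult_scale_left pmult_assoc_fbasis)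
  have basis_last: "pmult n (pmult n f g) (fbasis z) = pmult n f (pmult n g (fbasis z))"
    if "g \<in> lspan (path_basis n)" "f \<in> lspan (path_basis n)" for f g :: "path \<Rightarrow> 'k" and z
    using that
    by induction (auto simp: path_basis_def pmult_add_left pmult_scale_left pmult_add_right
        pmult_scale_right basis_right)
  from assms(3,1,2) show ?thesis
    by induction (auto simp: path_basis_def pmult_add_right pmult_scale_right basis_last)
qed

lemma pmult_assoc: "f \<in> PA n \<Longrightarrow> g \<in> PA n \<Longrightarrow> h \<in> PA n \<Longrightarrow> pmult n (pmult n f g) h = pmult n f (pmult n g h)"
  by (simp add: PA_eq_lspan pmult_assoc_lspan)

lemma asrc_less: "aidx a < n \<Longrightarrow> asrc n a < n"
  by (cases a) auto

lemma atgt_less: "aidx a < n \<Longrightarrow> atgt n a < n"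
  by (cases a) auto

lemma pvalid_arrow: "aidx a < n \<Longrightarrow> pvalid n (asrc n a) [a]"
  using asrc_less[of a n] atgt_less[of a n] by simp

lemma arrow_in_PA: "aidx a < n \<Longrightarrow> arrow n a \<in> PA n"
  unfolding arrow_def using pvalid_arrow by (auto intro: fbasis_in_PA)

lemma vert_in_PA: "i < n \<Longrightarrow> vert i \<in> PA n"
  unfolding vert_def by (rule fbasis_in_PA) simp

lemma vert_apply: "vert i (j, []) = (if j = i then 1 else 0)"
  by (simp add: vert_def fbasis_def)

lemma vert_mult_vert: "i < n \<Longrightarrow> j < n \<Longrightarrow> pmult n (vert i) (vert j) = (if i = j then vert i else (\<lambda>_. 0))"
  by (simp add: vert_def pmult_fbasis)

lemma arrow_mult_arrow:
  "aidx a < n \<Longrightarrow> aidx b < n \<Longrightarrow> atgt n a = asrc n b \<Longrightarrow>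
   pmult n (arrow n a) (arrow n b) = fbasis (asrc n a, [a, b])"
  unfolding arrow_def using pvalid_arrow[of a n] pvalid_arrow[of b n] by (simp add: pmult_fbasis)

section \<open>The preprojective ideal\<close>

definition path_As_Ar :: "nat \<Rightarrow> nat \<Rightarrow> path" where
  "path_As_Ar n i = ((i + 1) mod n, [As i, Ar i])"

definition path_Ar_As :: "nat \<Rightarrow> path" where
  "path_Ar_As j = (j, [Ar j, As j])"

lemma pvalid_path_As_Ar: "i < n \<Longrightarrow> pvalid n (fst (path_As_Ar n i)) (snd (path_As_Ar n i))"
  by (auto simp: path_As_Ar_def)

lemma pvalid_path_Ar_As: "j < n \<Longrightarrow> pvalid n (fst (path_Ar_As j)) (snd (path_Ar_As j))"
  by (auto simp: path_Ar_As_def)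

lemma arrow_As_mult_arrow_Ar: "i < n \<Longrightarrow> pmult n (arrow n (As i)) (arrow n (Ar i)) = fbasis (path_As_Ar n i)"
  by (simp add: arrow_mult_arrow path_As_Ar_def)

lemma arrow_Ar_mult_arrow_As: "j < n \<Longrightarrow> pmult n (arrow n (Ar j)) (arrow n (As j)) = fbasis (path_Ar_As j)"
  by (subst arrow_mult_arrow) (auto simp: path_Ar_As_def)

lemma omega_eq: "i < n \<Longrightarrow> omega n i = (\<lambda>p. fbasis (path_As_Ar n i) p - fbasis (path_Ar_As ((i + 1) mod n)) p)"
  by (simp add: omega_def psub_def arrow_As_mult_arrow_Ar arrow_Ar_mult_arrow_As)

lemma omega_in_PA: "i < n \<Longrightarrow> omega n i \<in> PA n"
  by (simp add: omega_eq PA_diff fbasis_in_PA pvalid_path_As_Ar pvalid_path_Ar_As)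

definition omega_generators :: "nat \<Rightarrow> (path \<Rightarrow> 'k::field) set" where
  "omega_generators n = {pmult n (pmult n (fbasis p) (omega n i)) (fbasis q) | p q i.
      pvalid n (fst p) (snd p) \<and> pvalid n (fst q) (snd q) \<and> i < n}"

lemma OmegaIdeal_eq_lspan: "OmegaIdeal n = lspan (omega_generators n)"
  by (simp add: OmegaIdeal_def omega_generators_def)

lemma omega_generatorsE:
  assumes "s \<in> omega_generators n"
  obtains x y i where "s = pmult n (pmult n (fbasis x) (omega n i)) (fbasis y)"
    and "pvalid n (fst x) (snd x)" "pvalid n (fst y) (snd y)" "i < n"
  using assms unfolding omega_generators_def by blast

lemma OmegaIdeal_zero: "(\<lambda>_. 0) \<in> OmegaIdeal n"
  unfolding OmegaIdeal_eq_lspan by (rule lspan.lspan_zero)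

lemma OmegaIdeal_add: "f \<in> OmegaIdeal n \<Longrightarrow> g \<in> OmegaIdeal n \<Longrightarrow> (\<lambda>p. f p + g p) \<in> OmegaIdeal n"
  unfolding OmegaIdeal_eq_lspan by (rule lspan_add)

lemma OmegaIdeal_scale: "f \<in> OmegaIdeal n \<Longrightarrow> (\<lambda>p. c * f p) \<in> OmegaIdeal n"
  unfolding OmegaIdeal_eq_lspan by (rule lspan_scale)

lemma OmegaIdeal_diff: "f \<in> OmegaIdeal n \<Longrightarrow> g \<in> OmegaIdeal n \<Longrightarrow> (\<lambda>p. f p - g p) \<in> OmegaIdeal n"
  unfolding OmegaIdeal_eq_lspan by (rule lspan_diff)

lemma OmegaIdeal_subset_PA: "OmegaIdeal n \<subseteq> (PA n :: (path \<Rightarrow> 'k::field) set)"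
proof
  fix w :: "path \<Rightarrow> 'k"
  assume "w \<in> OmegaIdeal n"
  then show "w \<in> PA n"
    unfolding OmegaIdeal_eq_lspan
    by induction (auto elim!: omega_generatorsE
        intro!: zero_in_PA PA_lincomb pmult_in_PA fbasis_in_PA omega_in_PA)
qed

lemma mult_omega_mult_in_OmegaIdeal:
  fixes u v :: "path \<Rightarrow> 'k::field"
  assumes "u \<in> PA n" "v \<in> PA n" "i < n"
  shows "pmult n (pmult n u (omega n i)) v \<in> OmegaIdeal n"
proof -
  have basis_right: "pmult n (pmult n u (omega n i)) (fbasis y) \<in> OmegaIdeal n"
    if "u \<in> lspan (path_basis n)" "pvalid n (fst y) (snd y)" for u :: "path \<Rightarrow> 'k" and y
    using that
  proof induction
    case (lspan_step s v c)
    then obtain x where "s = fbasis x" "pvalid n (fst x) (snd x)"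
      by (auto simp: path_basis_def)
    then have "pmult n (pmult n s (omega n i)) (fbasis y) \<in> omega_generators n"
      using lspan_step.prems \<open>i < n\<close> unfolding omega_generators_def by blast
    then show ?case
      using lspan_step unfolding pmult_add_left pmult_scale_left OmegaIdeal_eq_lspan
      by (intro lspan_add lspan_scale) (auto intro: lspan_base)
  qed (simp add: OmegaIdeal_zero)
  from assms(2,1) show ?thesis
    unfolding PA_eq_lspan
  proof induction
    case (lspan_step s v c)
    then show ?case
      unfolding pmult_add_right pmult_scale_right
      by (intro OmegaIdeal_add OmegaIdeal_scale) (auto simp: path_basis_def basis_right)
  qed (simp add: OmegaIdeal_zero)
qed

lemma omega_in_OmegaIdeal: "i < n \<Longrightarrow> (omega n i :: path \<Rightarrow> 'k::field) \<in> OmegaIdeal n"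
proof -
  assume i: "i < n"
  let ?e = "vert ((i + 1) mod n) :: path \<Rightarrow> 'k"
  have "pmult n (pmult n ?e (omega n i)) ?e = omega n i"
    using i by (simp add: vert_def omega_eq pmult_diff_right pmult_diff_left pmult_fbasis_pair
        path_As_Ar_def path_Ar_As_def)
  moreover have "pmult n (pmult n ?e (omega n i)) ?e \<in> OmegaIdeal n"
    using i by (intro mult_omega_mult_in_OmegaIdeal vert_in_PA) auto
  ultimately show ?thesis
    by simp
qed

lemma OmegaIdeal_mult_left: "w \<in> OmegaIdeal n \<Longrightarrow> f \<in> PA n \<Longrightarrow> pmult n f w \<in> OmegaIdeal n"
  unfolding OmegaIdeal_eq_lspan
proof (induction w rule: lspan.induct)
  case (lspan_step s v c)
  from \<open>s \<in> omega_generators n\<close> obtain x y i where s: "s = pmult n (pmult n (fbasis x) (omega n i)) (fbasis y)"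
    and "pvalid n (fst x) (snd x)" "pvalid n (fst y) (snd y)" and i: "i < n"
    by (rule omega_generatorsE)
  then have x: "fbasis x \<in> PA n" and y: "fbasis y \<in> PA n"
    by (simp_all add: fbasis_in_PA)
  have "pmult n f s = pmult n (pmult n (pmult n f (fbasis x)) (omega n i)) (fbasis y)"
    using pmult_assoc[OF lspan_step.prems x omega_in_PA[OF i]]
      pmult_assoc[OF lspan_step.prems pmult_in_PA[OF x omega_in_PA[OF i]] y]
    unfolding s by simp
  also have "\<dots> \<in> OmegaIdeal n"
    using \<open>f \<in> PA n\<close> x y i by (intro mult_omega_mult_in_OmegaIdeal pmult_in_PA)
  finally show ?case
    unfolding pmult_add_right pmult_scale_right OmegaIdeal_eq_lspan using lspan_step
    by (intro lspan_add lspan_scale) auto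
qed (simp add: lspan.lspan_zero)

lemma OmegaIdeal_mult_right: "w \<in> OmegaIdeal n \<Longrightarrow> f \<in> PA n \<Longrightarrow> pmult n w f \<in> OmegaIdeal n"
  unfolding OmegaIdeal_eq_lspan
proof (induction w rule: lspan.induct)
  case (lspan_step s v c)
  from \<open>s \<in> omega_generators n\<close> obtain x y i where s: "s = pmult n (pmult n (fbasis x) (omega n i)) (fbasis y)"
    and "pvalid n (fst x) (snd x)" "pvalid n (fst y) (snd y)" and i: "i < n"
    by (rule omega_generatorsE)
  then have x: "fbasis x \<in> PA n" and y: "fbasis y \<in> PA n"
    by (simp_all add: fbasis_in_PA)
  have "pmult n s f = pmult n (pmult n (fbasis x) (omega n i)) (pmult n (fbasis y) f)"
    unfolding s by (rule pmult_assoc[OF pmult_in_PA[OF x omega_in_PA[OF i]] y lspan_step.prems])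
  also have "\<dots> \<in> OmegaIdeal n"
    using \<open>f \<in> PA n\<close> x y i by (intro mult_omega_mult_in_OmegaIdeal pmult_in_PA)
  finally show ?case
    unfolding pmult_add_left pmult_scale_left OmegaIdeal_eq_lspan using lspan_step
    by (intro lspan_add lspan_scale) auto
qed (simp add: lspan.lspan_zero)

text \<open>A generator p \<omega>_i q of (\<Omega>) is a difference of two paths of length at least 2. It involves
  a 2-cycle at vertex l only if p and q are trivial and i + 1 = l, and then it involves both
  2-cycles a_l a_l^* and a_{l-1}^* a_{l-1} with opposite signs. Hence the sum of their coefficients
  vanishes on (\<Omega>) but not on a_l a_l^*.\<close>

definition two_cycle_sum :: "nat \<Rightarrow> nat \<Rightarrow> (path \<Rightarrow> 'k::field) \<Rightarrow> 'k" where
  "two_cycle_sum n l f = f (l, [Ar l, As l]) + f (l, [As ((l + n - 1) mod n), Ar ((l + n - 1) mod n)])"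

lemma suc_mod_eq_iff: "(i::nat) < n \<Longrightarrow> l < n \<Longrightarrow> (i + 1) mod n = l \<longleftrightarrow> i = (l + n - 1) mod n"
  by (cases "l = 0"; cases "i + 1 = n") (auto simp: mod_if)

lemma two_cycle_sum_generator:
  assumes x: "pvalid n (fst x) (snd x)" and y: "pvalid n (fst y) (snd y)" and i: "i < n" and l: "l < n"
  shows "two_cycle_sum n l (pmult n (pmult n (fbasis x) (omega n i)) (fbasis y)) = 0"
proof -
  obtain v xs w ys where xy: "x = (v, xs)" "y = (w, ys)"
    by (cases x, cases y)
  let ?j = "(i + 1) mod n"
  have product: "pmult n (pmult n (fbasis (v, xs)) (omega n i)) (fbasis (w, ys)) =
     (if pend n v xs = ?j \<and> w = ?j
      then (\<lambda>p. fbasis (v, xs @ [As i, Ar i] @ ys) p - fbasis (v, xs @ [Ar ?j, As ?j] @ ys) p)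
      else (\<lambda>_. 0))"
    using x y i unfolding xy
    by (cases "pend n v xs = ?j") (auto simp: omega_eq pmult_diff_right pmult_diff_left
        pmult_fbasis_pair path_As_Ar_def path_Ar_As_def pvalid_append pend_append)
  show ?thesis
    unfolding xy product using suc_mod_eq_iff[OF i l]
    by (auto simp: two_cycle_sum_def fbasis_def Cons_eq_append_conv append_eq_Cons_conv)
qed

lemma two_cycle_sum_lincomb: "two_cycle_sum n l (\<lambda>p. c * f p + g p) = c * two_cycle_sum n l f + two_cycle_sum n l g"
  by (simp add: two_cycle_sum_def algebra_simps)

lemma two_cycle_sum_OmegaIdeal: "w \<in> OmegaIdeal n \<Longrightarrow> l < n \<Longrightarrow> two_cycle_sum n l w = 0"
  unfolding OmegaIdeal_eq_lspan
proof (induction w rule: lspan.induct)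
  case (lspan_step s v c)
  then show ?case
    by (auto simp: two_cycle_sum_lincomb elim!: omega_generatorsE intro: two_cycle_sum_generator)
qed (simp add: two_cycle_sum_def)

lemma two_cycle_sum_path_Ar_As: "l < n \<Longrightarrow> two_cycle_sum n l (fbasis (path_Ar_As l)) = 1"
  by (simp add: two_cycle_sum_def fbasis_def path_Ar_As_def)

lemma lincomb_path_Ar_As_in_OmegaIdeal_iff:
  assumes "l < n" and "w \<in> OmegaIdeal n"
  shows "(\<lambda>p. c * w p + e * fbasis (path_Ar_As l) p) \<in> OmegaIdeal n \<longleftrightarrow> e = 0"
proof
  assume "(\<lambda>p. c * w p + e * fbasis (path_Ar_As l) p) \<in> OmegaIdeal n"
  then have "two_cycle_sum n l (\<lambda>p. c * w p + e * fbasis (path_Ar_As l) p) = 0"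
    using assms(1) by (rule two_cycle_sum_OmegaIdeal)
  moreover have "two_cycle_sum n l (\<lambda>p. c * w p + e * fbasis (path_Ar_As l) p)
      = c * two_cycle_sum n l w + e * two_cycle_sum n l (fbasis (path_Ar_As l))"
    by (simp add: two_cycle_sum_def algebra_simps)
  ultimately show "e = 0"
    using assms by (simp add: two_cycle_sum_OmegaIdeal two_cycle_sum_path_Ar_As)
qed (use assms in \<open>simp add: OmegaIdeal_scale\<close>)

section \<open>Actions of the Taft algebra on the path algebra\<close>

locale taft_action =
  fixes n :: nat and lam :: "'k::field" and r m :: nat
    and G X :: "(path \<Rightarrow> 'k) \<Rightarrow> (path \<Rightarrow> 'k)"
  assumes module_algebra: "taft_module_algebra n lam r m G X"
    and lam_nonzero: "lam \<noteq> 0"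
begin

lemma G_in_PA: "a \<in> PA n \<Longrightarrow> G a \<in> PA n"
  using module_algebra by (simp add: taft_module_algebra_def)

lemma X_in_PA: "a \<in> PA n \<Longrightarrow> X a \<in> PA n"
  using module_algebra by (simp add: taft_module_algebra_def)

lemma G_lincomb: "a \<in> PA n \<Longrightarrow> b \<in> PA n \<Longrightarrow> G (\<lambda>p. c * a p + b p) = (\<lambda>p. c * G a p + G b p)"
  using module_algebra PA_scale[of a n c] by (simp add: taft_module_algebra_def padd_def psmult_def)

lemma X_lincomb: "a \<in> PA n \<Longrightarrow> b \<in> PA n \<Longrightarrow> X (\<lambda>p. c * a p + b p) = (\<lambda>p. c * X a p + X b p)"
  using module_algebra PA_scale[of a n c] by (simp add: taft_module_algebra_def padd_def psmult_def)

lemma G_scale: "a \<in> PA n \<Longrightarrow> G (\<lambda>p. c * a p) = (\<lambda>p. c * G a p)"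
  using module_algebra by (simp add: taft_module_algebra_def psmult_def)

lemma X_scale: "a \<in> PA n \<Longrightarrow> X (\<lambda>p. c * a p) = (\<lambda>p. c * X a p)"
  using module_algebra by (simp add: taft_module_algebra_def psmult_def)

lemma G_zero: "G (\<lambda>_. 0) = (\<lambda>_. 0)"
  using G_scale[OF zero_in_PA, of 0] by simp

lemma X_zero: "X (\<lambda>_. 0) = (\<lambda>_. 0)"
  using X_scale[OF zero_in_PA, of 0] by simp

lemma G_diff: "a \<in> PA n \<Longrightarrow> b \<in> PA n \<Longrightarrow> G (\<lambda>p. a p - b p) = (\<lambda>p. G a p - G b p)"
  using G_lincomb[of b a "-1"] by simp

lemma X_diff: "a \<in> PA n \<Longrightarrow> b \<in> PA n \<Longrightarrow> X (\<lambda>p. a p - b p) = (\<lambda>p. X a p - X b p)"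
  using X_lincomb[of b a "-1"] by simp

lemma G_mult: "a \<in> PA n \<Longrightarrow> b \<in> PA n \<Longrightarrow> G (pmult n a b) = pmult n (G a) (G b)"
  using module_algebra by (simp add: taft_module_algebra_def)

lemma X_mult: "a \<in> PA n \<Longrightarrow> b \<in> PA n \<Longrightarrow> X (pmult n a b) = (\<lambda>p. pmult n a (X b) p + pmult n (X a) (G b) p)"
  using module_algebra by (simp add: taft_module_algebra_def padd_def)

lemma X_G: "a \<in> PA n \<Longrightarrow> X (G a) = (\<lambda>p. inverse lam * G (X a) p)"
  using module_algebra lam_nonzero by (simp add: taft_module_algebra_def psmult_def field_simps)

lemma G_omega: "i < n \<Longrightarrow> G (omega n i) = (\<lambda>p. pmult n (G (arrow n (As i))) (G (arrow n (Ar i))) p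
    - pmult n (G (arrow n (Ar ((i + 1) mod n)))) (G (arrow n (As ((i + 1) mod n)))) p)"
  by (simp add: omega_def psub_def G_diff G_mult pmult_in_PA arrow_in_PA)

lemma G_generator_in_OmegaIdeal:
  assumes "G (omega n i) \<in> OmegaIdeal n" "i < n" "u \<in> PA n" "v \<in> PA n"
  shows "G (pmult n (pmult n u (omega n i)) v) \<in> OmegaIdeal n"
  using assms by (simp add: G_mult pmult_in_PA omega_in_PA G_in_PA OmegaIdeal_mult_left OmegaIdeal_mult_right)

lemma X_generator_in_OmegaIdeal:
  assumes "G (omega n i) \<in> OmegaIdeal n" "X (omega n i) \<in> OmegaIdeal n" "i < n" "u \<in> PA n" "v \<in> PA n"
  shows "X (pmult n (pmult n u (omega n i)) v) \<in> OmegaIdeal n"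
proof -
  have "X (pmult n (pmult n u (omega n i)) v) = (\<lambda>p. pmult n (pmult n u (omega n i)) (X v) p +
      (pmult n (pmult n u (X (omega n i))) (G v) p + pmult n (pmult n (X u) (G (omega n i))) (G v) p))"
    using assms by (simp add: X_mult pmult_in_PA omega_in_PA pmult_add_left)
  also have "\<dots> \<in> OmegaIdeal n"
    using assms omega_in_OmegaIdeal[OF \<open>i < n\<close>]
    by (intro OmegaIdeal_add OmegaIdeal_mult_right OmegaIdeal_mult_left X_in_PA G_in_PA)
  finally show ?thesis .
qed

lemma descends_iff_omega:
  "descends n G X \<longleftrightarrow> (\<forall>i<n. G (omega n i) \<in> OmegaIdeal n \<and> X (omega n i) \<in> OmegaIdeal n)"
proof
  assume "descends n G X"
  then show "\<forall>i<n. G (omega n i) \<in> OmegaIdeal n \<and> X (omega n i) \<in> OmegaIdeal n"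
    by (simp add: descends_def omega_in_OmegaIdeal)
next
  assume omega: "\<forall>i<n. G (omega n i) \<in> OmegaIdeal n \<and> X (omega n i) \<in> OmegaIdeal n"
  have "G w \<in> OmegaIdeal n \<and> X w \<in> OmegaIdeal n" if "w \<in> lspan (omega_generators n)" for w
    using that
  proof induction
    case (lspan_step s v c)
    from \<open>s \<in> omega_generators n\<close> obtain x y i
      where s: "s = pmult n (pmult n (fbasis x) (omega n i)) (fbasis y)"
        and "pvalid n (fst x) (snd x)" "pvalid n (fst y) (snd y)" and i: "i < n"
      by (rule omega_generatorsE)
    then have x: "fbasis x \<in> PA n" and y: "fbasis y \<in> PA n"
      by (simp_all add: fbasis_in_PA)
    have "s \<in> OmegaIdeal n" and "v \<in> OmegaIdeal n"
      using lspan_step.hyps by (simp_all add: OmegaIdeal_eq_lspan lspan_base)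
    then have "s \<in> PA n" and "v \<in> PA n"
      using OmegaIdeal_subset_PA by blast+
    moreover have "G s \<in> OmegaIdeal n" "X s \<in> OmegaIdeal n"
      unfolding s using omega i x y
      by (blast intro: G_generator_in_OmegaIdeal X_generator_in_OmegaIdeal)+
    ultimately show ?case
      using lspan_step.IH by (simp add: G_lincomb X_lincomb OmegaIdeal_add OmegaIdeal_scale)
  qed (simp add: G_zero X_zero OmegaIdeal_zero)
  then show "descends n G X"
    by (simp add: descends_def OmegaIdeal_eq_lspan)
qed

end

section \<open>Linear actions\<close>

lemma vertex_span_mult_vert:
  assumes "V \<in> lspan (fbasis ` {p. pvalid n (fst p) (snd p) \<and> snd p = []})" and "j < n"
  shows "pmult n (vert j) V = (\<lambda>p. V (j, []) * vert j p) \<and> pmult n V (vert j) = (\<lambda>p. V (j, []) * vert j p)"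
  using assms
proof induction
  case (lspan_step s v c)
  then obtain u where "s = vert u" "u < n"
    by (auto simp: vert_def)
  with lspan_step show ?case
    by (auto simp: vert_mult_vert vert_apply pmult_add_left pmult_add_right pmult_scale_left
        pmult_scale_right algebra_simps)
qed simp

locale linear_taft_action = taft_action n lam r m G X
  for n :: nat and lam :: "'k::field" and r m G X +
  fixes gv :: "nat \<Rightarrow> nat"
  assumes gv_less: "i < n \<Longrightarrow> gv i < n"
    and inj_gv: "inj_on gv {..<n}"
    and G_vert: "i < n \<Longrightarrow> G (vert i) = vert (gv i)"
    and linear: "x_linear n X"
begin

lemma X_vert_in_vertex_span:
  "i < n \<Longrightarrow> X (vert i) \<in> lspan (fbasis ` {p. pvalid n (fst p) (snd p) \<and> snd p = []})"
  using linear by (simp add: x_linear_def)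

lemma X_vert_two_terms:
  assumes i: "i < n"
  shows "X (vert i) = (\<lambda>p. X (vert i) (i, []) * vert i p + X (vert i) (gv i, []) * vert (gv i) p)"
proof -
  have "X (vert i) = X (pmult n (vert i) (vert i))"
    using i by (simp add: vert_mult_vert)
  also have "\<dots> = (\<lambda>p. pmult n (vert i) (X (vert i)) p + pmult n (X (vert i)) (vert (gv i)) p)"
    using i by (simp add: X_mult vert_in_PA G_vert)
  also have "\<dots> = (\<lambda>p. X (vert i) (i, []) * vert i p + X (vert i) (gv i, []) * vert (gv i) p)"
    using vertex_span_mult_vert[OF X_vert_in_vertex_span[OF i]] i gv_less[OF i] by simp
  finally show ?thesis .
qed

lemma X_vert_fixed:
  assumes i: "i < n" and fixed: "gv i = i"
  shows "X (vert i) = (\<lambda>_. 0)"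
proof -
  define c where "c = X (vert i) (i, [])"
  have X_vert_i: "X (vert i) = (\<lambda>p. c * vert i p + c * vert i p)"
    unfolding c_def by (rule X_vert_two_terms[OF i, unfolded fixed])
  then have "c = c + c"
    using fun_cong[OF X_vert_i, of "(i, [])"] unfolding c_def[symmetric] by (simp add: vert_apply)
  then have "c = 0"
    by (metis add.right_neutral add_left_cancel)
  then show ?thesis
    using X_vert_i by simp
qed

lemma X_vert_moved:
  assumes i: "i < n" and moved: "gv i \<noteq> i"
  shows "X (vert i) (gv i, []) = - (inverse lam * X (vert i) (i, []))"
proof -
  define k where "k = gv i"
  define c where "c = X (vert i) (i, [])"
  define c' where "c' = X (vert i) (k, [])"
  have k: "k < n" and "k \<noteq> i"
    using gv_less[OF i] moved by (simp_all add: k_def)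
  have "gv k \<noteq> k"
    using inj_gv i k moved unfolding k_def by (metis inj_on_contraD lessThan_iff)
  have X_vert_i: "X (vert i) = (\<lambda>p. c * vert i p + c' * vert k p)"
    unfolding c_def c'_def k_def by (rule X_vert_two_terms[OF i])
  have X_vert_k: "X (vert k) = (\<lambda>p. inverse lam * (c * vert k p + c' * vert (gv k) p))"
    using X_G[OF vert_in_PA[OF i]] i k
    by (simp add: X_vert_i G_vert G_lincomb G_scale vert_in_PA PA_scale k_def)
  have "(\<lambda>_. 0) = X (pmult n (vert k) (vert i))"
    using i k \<open>k \<noteq> i\<close> by (simp add: vert_mult_vert X_zero)
  also have "\<dots> = (\<lambda>p. pmult n (vert k) (X (vert i)) p + pmult n (X (vert k)) (vert k) p)"
    using i k by (simp add: X_mult vert_in_PA G_vert k_def)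
  also have "\<dots> = (\<lambda>p. (c' + X (vert k) (k, [])) * vert k p)"
    using vertex_span_mult_vert[OF X_vert_in_vertex_span[OF k] k] i k \<open>k \<noteq> i\<close> unfolding X_vert_i
    by (simp add: pmult_add_right pmult_scale_right vert_mult_vert algebra_simps)
  finally have "c' + X (vert k) (k, []) = 0"
    by (metis vert_apply mult_1_right)
  then have "c' = - (inverse lam * c)"
    using \<open>gv k \<noteq> k\<close> by (simp add: X_vert_k vert_apply eq_neg_iff_add_eq_0)
  then show ?thesis
    by (simp add: c_def c'_def k_def)
qed

lemma X_vert:
  assumes i: "i < n"
  shows "X (vert i) = (\<lambda>p. X (vert i) (i, []) * vert i p - X (vert i) (i, []) * inverse lam * G (vert i) p)"
proof (cases "gv i = i")
  case True
  then show ?thesis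
    using X_vert_fixed[OF i True] by simp
next
  case False
  have "X (vert i) = (\<lambda>p. X (vert i) (i, []) * vert i p + X (vert i) (gv i, []) * vert (gv i) p)"
    by (rule X_vert_two_terms[OF i])
  also have "\<dots> = (\<lambda>p. X (vert i) (i, []) * vert i p - X (vert i) (i, []) * inverse lam * G (vert i) p)"
    by (simp add: X_vert_moved[OF i False] G_vert[OF i] mult.commute)
  finally show ?thesis .
qed

abbreviation \<gamma> :: "nat \<Rightarrow> 'k" where
  "\<gamma> \<equiv> gammas n lam G X"

abbreviation \<sigma> :: "arr \<Rightarrow> path \<Rightarrow> 'k" where
  "\<sigma> \<equiv> qsigma n lam G X"

lemma X_vert_gammas:
  assumes "i < n"
  shows "X (vert i) = (\<lambda>p. \<gamma> i * vert i p - \<gamma> i * inverse lam * G (vert i) p)"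
proof -
  have "\<exists>\<gamma>. \<forall>i<n. X (vert i) = (\<lambda>p. \<gamma> i * vert i p - \<gamma> i * inverse lam * G (vert i) p)"
    by (intro exI[of _ "\<lambda>i. X (vert i) (i, [])"] allI impI X_vert)
  from someI_ex[OF this] show ?thesis
    unfolding gammas_def using assms by blast
qed

text \<open>The term left over when x \<cdot> e_v = x \<cdot> (e_v e_v) is expanded by the twisted Leibniz rule.\<close>

lemma cross_term_vert: "v < n \<Longrightarrow> \<gamma> v * (1 - inverse lam) * pmult n (vert v) (G (vert v)) p = 0"
proof -
  assume v: "v < n"
  define E where "E = (vert v :: path \<Rightarrow> 'k)"
  have E: "E \<in> PA n"
    using v by (simp add: E_def vert_in_PA)
  have EE: "pmult n E E = E"
    using vert_mult_vert[OF v v] by (simp add: E_def)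
  have GEGE: "pmult n (G E) (G E) = G E"
    using G_mult[OF E E] EE by simp
  have XE: "X E = (\<lambda>p. \<gamma> v * E p - \<gamma> v * inverse lam * G E p)"
    using X_vert_gammas[OF v] by (simp add: E_def)
  have "X E = X (pmult n E E)"
    using EE by simp
  also have "\<dots> = (\<lambda>p. pmult n E (X E) p + pmult n (X E) (G E) p)"
    by (rule X_mult[OF E E])
  also have "\<dots> = (\<lambda>p. \<gamma> v * E p - \<gamma> v * inverse lam * pmult n E (G E) p
      + (\<gamma> v * pmult n E (G E) p - \<gamma> v * inverse lam * G E p))"
    unfolding XE pmult_diff_right pmult_diff_left pmult_scale_left pmult_scale_right EE GEGE ..
  finally have "X E p = \<gamma> v * E p - \<gamma> v * inverse lam * pmult n E (G E) p
      + (\<gamma> v * pmult n E (G E) p - \<gamma> v * inverse lam * G E p)"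
    by simp
  then show ?thesis
    unfolding XE E_def[symmetric] by algebra
qed

lemma cross_term_arrow:
  assumes a: "aidx a < n" and b: "aidx b < n" and ab: "atgt n a = v" "asrc n b = v"
  shows "\<gamma> v * (1 - inverse lam) * pmult n (arrow n a) (G (arrow n b)) p = 0"
proof -
  have v: "v < n"
    using atgt_less[OF a] ab by simp
  define E where "E = (vert v :: path \<Rightarrow> 'k)"
  define \<kappa> where "\<kappa> = \<gamma> v * (1 - inverse lam)"
  have E: "E \<in> PA n"
    using v by (simp add: E_def vert_in_PA)
  have arrows: "arrow n a \<in> PA n" "arrow n b \<in> PA n"
    using a b by (simp_all add: arrow_in_PA)
  have "pmult n (arrow n a) E = arrow n a" "pmult n E (arrow n b) = arrow n b"
    using pvalid_arrow[OF a] pvalid_arrow[OF b] v ab by (simp_all add: E_def arrow_def vert_def pmult_fbasis)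
  then have "pmult n (arrow n a) (G (arrow n b)) = pmult n (pmult n (arrow n a) E) (pmult n (G E) (G (arrow n b)))"
    using G_mult[OF E arrows(2)] by simp
  also have "\<dots> = pmult n (arrow n a) (pmult n (pmult n E (G E)) (G (arrow n b)))"
    using pmult_assoc[OF arrows(1) E pmult_in_PA[OF G_in_PA[OF E] G_in_PA[OF arrows(2)]]]
      pmult_assoc[OF E G_in_PA[OF E] G_in_PA[OF arrows(2)]] by simp
  finally have factor: "pmult n (arrow n a) (G (arrow n b))
      = pmult n (arrow n a) (pmult n (pmult n E (G E)) (G (arrow n b)))" .
  have vanish: "(\<lambda>p. \<kappa> * pmult n E (G E) p) = (\<lambda>_. 0)"
    unfolding \<kappa>_def E_def by (intro ext cross_term_vert[OF v])
  have "(\<lambda>p. \<kappa> * pmult n (arrow n a) (G (arrow n b)) p)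
      = pmult n (arrow n a) (pmult n (\<lambda>p. \<kappa> * pmult n E (G E) p) (G (arrow n b)))"
    unfolding factor pmult_scale_left pmult_scale_right ..
  also have "\<dots> = (\<lambda>_. 0)"
    unfolding vanish by simp
  finally have "(\<lambda>p. \<kappa> * pmult n (arrow n a) (G (arrow n b)) p) = (\<lambda>_. 0)" .
  from fun_cong[OF this, of p] show ?thesis
    by (simp only: \<kappa>_def)
qed

lemma X_arrow: "X (arrow n a) = (\<lambda>p. \<sigma> a p + \<gamma> (atgt n a) * arrow n a p - \<gamma> (asrc n a) * inverse lam * G (arrow n a) p)"
  by (simp add: qsigma_def)

lemma X_omega:
  assumes i: "i < n"
  shows "X (omega n i) p = (pmult n (arrow n (As i)) (\<sigma> (Ar i)) p
                 + pmult n (\<sigma> (As i)) (G (arrow n (Ar i))) p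
                 - pmult n (arrow n (Ar ((i + 1) mod n))) (\<sigma> (As ((i + 1) mod n))) p
                 - pmult n (\<sigma> (Ar ((i + 1) mod n))) (G (arrow n (As ((i + 1) mod n)))) p)
        + \<gamma> ((i + 1) mod n) * omega n i p - \<gamma> ((i + 1) mod n) * inverse lam * G (omega n i) p"
proof -
  let ?j = "(i + 1) mod n"
  have j: "?j < n"
    using i by simp
  have Leibniz: "X (omega n i) = (\<lambda>p.
      (pmult n (arrow n (As i)) (X (arrow n (Ar i))) p + pmult n (X (arrow n (As i))) (G (arrow n (Ar i))) p)
    - (pmult n (arrow n (Ar ?j)) (X (arrow n (As ?j))) p + pmult n (X (arrow n (Ar ?j))) (G (arrow n (As ?j))) p))"
    using i j by (simp add: omega_def psub_def X_diff X_mult pmult_in_PA arrow_in_PA)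
  have "\<gamma> i * (1 - inverse lam) * pmult n (arrow n (As i)) (G (arrow n (Ar i))) p = 0"
    by (rule cross_term_arrow) (use i in simp_all)
  moreover have "\<gamma> ((?j + 1) mod n) * (1 - inverse lam) * pmult n (arrow n (Ar ?j)) (G (arrow n (As ?j))) p = 0"
    by (rule cross_term_arrow) (use j in simp_all)
  ultimately show ?thesis
    unfolding Leibniz G_omega[OF i]
    unfolding omega_def psub_def X_arrow pmult_add_left pmult_add_right pmult_diff_left
      pmult_diff_right pmult_scale_left pmult_scale_right
    by (simp only: atgt.simps asrc.simps) algebra
qed

end

section \<open>Rotations and reflections\<close>

lemma rotation_index_inj: "inj_on (\<lambda>i. (i + d) mod n) {..<n::nat}"
proof (rule inj_onI)
  fix i j
  assume "i \<in> {..<n}" "j \<in> {..<n}" "(i + d) mod n = (j + d) mod n"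
  then have "[i = j] (mod n)" and "i < n" "j < n"
    by (simp_all add: cong_def[symmetric] cong_add_rcancel_nat)
  then show "i = j"
    by (simp add: cong_less_modulus_unique_nat)
qed

lemma reflection_index_inj:
  assumes "d < (n::nat)"
  shows "inj_on (\<lambda>i. (2 * n - (d + i)) mod n) {..<n}"
proof (rule inj_onI)
  fix i j
  assume i: "i \<in> {..<n}" and j: "j \<in> {..<n}" and eq: "(2 * n - (d + i)) mod n = (2 * n - (d + j)) mod n"
  have "[2 * n - (d + i) = 2 * n - (d + j)] (mod n)"
    using eq by (simp add: cong_def)
  then have "[2 * n - (d + i) + (i + j) = 2 * n - (d + j) + (i + j)] (mod n)"
    by (rule cong_add) (rule cong_refl)
  moreover have "2 * n - (d + i) + (i + j) = (2 * n - d) + j" "2 * n - (d + j) + (i + j) = (2 * n - d) + i"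
    using assms i j by auto
  ultimately have "[(2 * n - d) + j = (2 * n - d) + i] (mod n)"
    by simp
  then show "i = j"
    using i j by (metis cong_add_lcancel_nat cong_less_modulus_unique_nat lessThan_iff)
qed

lemma rotation_index_suc: "((i + d) mod n + 1) mod n = ((i + 1) mod n + d) mod (n::nat)"
  by (simp add: mod_simps add.commute add.left_commute)

lemma reflection_index_suc:
  assumes "(i::nat) < n" "d < n"
  shows "((2 * n - (d + (i + 1) mod n + 1)) mod n + 1) mod n = (2 * n - (d + i + 1)) mod n"
proof (cases "i + 1 < n")
  case True
  then have "((2 * n - (d + (i + 1) mod n + 1)) mod n + 1) mod n = (2 * n - (d + i + 2) + 1) mod n"
    by (simp add: mod_simps)
  also have "2 * n - (d + i + 2) + 1 = 2 * n - (d + i + 1)"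
    using True assms by simp
  finally show ?thesis .
next
  case False
  then have "i + 1 = n"
    using assms by simp
  then have "((2 * n - (d + (i + 1) mod n + 1)) mod n + 1) mod n = (2 * n - (d + 1) + 1) mod n"
    by (simp add: mod_simps)
  also have "2 * n - (d + 1) + 1 = (2 * n - (d + i + 1)) + n"
    using \<open>i + 1 = n\<close> assms by simp
  finally show ?thesis
    by simp
qed

lemma rotation_or_reflection_permutes_vertices:
  assumes "g_rotation n d mu mus G \<or> g_reflection n d mu mus G" and "d < n"
  obtains gv where "\<And>i. i < n \<Longrightarrow> gv i < n" "inj_on gv {..<n}" "\<And>i. i < n \<Longrightarrow> G (vert i) = vert (gv i)"
  using assms(1)
proof
  assume "g_rotation n d mu mus G"
  then show thesis
    using that[of "\<lambda>i. (i + d) mod n"] assms(2) rotation_index_inj by (simp add: g_rotation_def)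
next
  assume "g_reflection n d mu mus G"
  then show thesis
    using that[of "\<lambda>i. (2 * n - (d + i)) mod n"] assms(2) reflection_index_inj by (simp add: g_reflection_def)
qed

context taft_action
begin

lemma G_omega_rotation:
  assumes rot: "g_rotation n d mu mus G" and i: "i < n"
  shows "G (omega n i) = (\<lambda>p. (mu i * mus i) * omega n ((i + d) mod n) p
     + (mu i * mus i - mu ((i + 1) mod n) * mus ((i + 1) mod n)) * fbasis (path_Ar_As (((i + 1) mod n + d) mod n)) p)"
proof -
  define j where "j = (i + 1) mod n"
  define k where "k = (i + d) mod n"
  define k' where "k' = (j + d) mod n"
  have j: "j < n" and k: "k < n" and k': "k' < n" and "(k + 1) mod n = k'"
    using i rotation_index_suc[of i d n] by (simp_all add: j_def k_def k'_def)
  have "G (arrow n (As i)) = psmult (mus i) (arrow n (As k))" "G (arrow n (Ar i)) = psmult (mu i) (arrow n (Ar k))"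
      "G (arrow n (As j)) = psmult (mus j) (arrow n (As k'))" "G (arrow n (Ar j)) = psmult (mu j) (arrow n (Ar k'))"
    using rot i j by (auto simp: g_rotation_def k_def k'_def)
  then have "G (omega n i) = (\<lambda>p. mus i * (mu i * fbasis (path_As_Ar n k) p) - mu j * (mus j * fbasis (path_Ar_As k') p))"
    unfolding G_omega[OF i] j_def[symmetric]
    by (simp add: pmult_psmult arrow_As_mult_arrow_Ar[OF k] arrow_Ar_mult_arrow_As[OF k'])
  also have "\<dots> = (\<lambda>p. (mu i * mus i) * omega n k p + (mu i * mus i - mu j * mus j) * fbasis (path_Ar_As k') p)"
    unfolding omega_eq[OF k] \<open>(k + 1) mod n = k'\<close> by (simp add: algebra_simps)
  finally show ?thesis
    by (simp add: j_def k_def k'_def)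
qed

lemma G_omega_reflection:
  assumes rfl: "g_reflection n d mu mus G" and i: "i < n" and d: "d < n"
  shows "G (omega n i) = (\<lambda>p. - (mu ((i + 1) mod n) * mus ((i + 1) mod n)) * omega n ((2 * n - (d + (i + 1) mod n + 1)) mod n) p
     + (mu i * mus i - mu ((i + 1) mod n) * mus ((i + 1) mod n)) * fbasis (path_Ar_As ((2 * n - (d + i + 1)) mod n)) p)"
proof -
  define j where "j = (i + 1) mod n"
  define k where "k = (2 * n - (d + i + 1)) mod n"
  define k' where "k' = (2 * n - (d + j + 1)) mod n"
  have j: "j < n" and k: "k < n" and k': "k' < n" and "(k' + 1) mod n = k"
    using i reflection_index_suc[OF i d] by (simp_all add: j_def k_def k'_def)
  have "G (arrow n (As i)) = psmult (mus i) (arrow n (Ar k))" "G (arrow n (Ar i)) = psmult (mu i) (arrow n (As k))"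
      "G (arrow n (As j)) = psmult (mus j) (arrow n (Ar k'))" "G (arrow n (Ar j)) = psmult (mu j) (arrow n (As k'))"
    using rfl i j by (auto simp: g_reflection_def k_def k'_def)
  then have "G (omega n i) = (\<lambda>p. mus i * (mu i * fbasis (path_Ar_As k) p) - mu j * (mus j * fbasis (path_As_Ar n k') p))"
    unfolding G_omega[OF i] j_def[symmetric]
    by (simp add: pmult_psmult arrow_As_mult_arrow_Ar[OF k'] arrow_Ar_mult_arrow_As[OF k])
  also have "\<dots> = (\<lambda>p. - (mu j * mus j) * omega n k' p + (mu i * mus i - mu j * mus j) * fbasis (path_Ar_As k) p)"
    unfolding omega_eq[OF k'] \<open>(k' + 1) mod n = k\<close> by (simp add: algebra_simps)
  finally show ?thesis
    by (simp add: j_def k_def k'_def)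
qed

lemma G_omega_in_OmegaIdeal_iff:
  assumes g: "g_rotation n d mu mus G \<or> g_reflection n d mu mus G" and i: "i < n" and d: "d < n"
  shows "G (omega n i) \<in> OmegaIdeal n \<longleftrightarrow> mu i * mus i - mu ((i + 1) mod n) * mus ((i + 1) mod n) = 0"
  using g
proof
  assume rot: "g_rotation n d mu mus G"
  show ?thesis
    unfolding G_omega_rotation[OF rot i]
    by (rule lincomb_path_Ar_As_in_OmegaIdeal_iff[OF _ omega_in_OmegaIdeal]) (use i in simp_all)
next
  assume rfl: "g_reflection n d mu mus G"
  show ?thesis
    unfolding G_omega_reflection[OF rfl i d]
    by (rule lincomb_path_Ar_As_in_OmegaIdeal_iff[OF _ omega_in_OmegaIdeal]) (use i in simp_all)
qed

end

context linear_taft_action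
begin

lemma X_omega_in_OmegaIdeal_iff:
  assumes i: "i < n" and G_omega: "G (omega n i) \<in> OmegaIdeal n"
  shows "X (omega n i) \<in> OmegaIdeal n \<longleftrightarrow>
    (\<lambda>p. pmult n (arrow n (As i)) (\<sigma> (Ar i)) p
       + pmult n (\<sigma> (As i)) (G (arrow n (Ar i))) p
       - pmult n (arrow n (Ar ((i + 1) mod n))) (\<sigma> (As ((i + 1) mod n))) p
       - pmult n (\<sigma> (Ar ((i + 1) mod n))) (G (arrow n (As ((i + 1) mod n)))) p) \<in> OmegaIdeal n"
    (is "_ \<longleftrightarrow> ?S \<in> OmegaIdeal n")
proof -
  define R where "R = (\<lambda>p. \<gamma> ((i + 1) mod n) * omega n i p - \<gamma> ((i + 1) mod n) * inverse lam * G (omega n i) p)"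
  have R: "R \<in> OmegaIdeal n"
    unfolding R_def mult.assoc[of _ "inverse lam"]
    using omega_in_OmegaIdeal[OF i] G_omega by (intro OmegaIdeal_diff OmegaIdeal_scale)
  have "X (omega n i) = (\<lambda>p. ?S p + R p)"
    using X_omega[OF i] by (simp add: R_def fun_eq_iff algebra_simps)
  moreover have "?S = (\<lambda>p. X (omega n i) p - R p)"
    using X_omega[OF i] by (simp add: R_def fun_eq_iff algebra_simps)
  ultimately show ?thesis
    using R by (metis OmegaIdeal_add OmegaIdeal_diff)
qed

end

theorem lemma2p7:
  fixes n r m d :: nat and lam :: "'k::field"
    and G X :: "(path \<Rightarrow> 'k) \<Rightarrow> (path \<Rightarrow> 'k)"
    and mu mus :: "nat \<Rightarrow> 'k"
  assumes "r > 1" and "m > 0" and "r dvd m"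
    and "lam ^ r = 1" and "\<forall>k. 0 < k \<and> k < r \<longrightarrow> lam ^ k \<noteq> 1"
    and "of_nat r \<noteq> (0::'k)"
    and "n \<ge> 3" and "d < n"
    and "\<forall>i<n. mu i \<noteq> 0 \<and> mus i \<noteq> 0"
    and "taft_module_algebra n lam r m G X"
    and "x_linear n X"
    and "inner_faithful n lam r m G X"
    and "g_rotation n d mu mus G \<or> g_reflection n d mu mus G"
  shows "descends n G X \<longleftrightarrow>
     ((\<forall>i<n. mu i * mus i - mu ((i + 1) mod n) * mus ((i + 1) mod n) = 0) \<and>
      (\<forall>i<n. (\<lambda>p. pmult n (arrow n (As i)) (qsigma n lam G X (Ar i)) p
                 + pmult n (qsigma n lam G X (As i)) (G (arrow n (Ar i))) p
                 - pmult n (arrow n (Ar ((i + 1) mod n))) (qsigma n lam G X (As ((i + 1) mod n))) p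
                 - pmult n (qsigma n lam G X (Ar ((i + 1) mod n))) (G (arrow n (As ((i + 1) mod n)))) p)
             \<in> OmegaIdeal n))"
proof -
  have "lam \<noteq> 0"
    using \<open>lam ^ r = 1\<close> \<open>r > 1\<close> by (auto simp: power_0_left)
  obtain gv where "\<And>i. i < n \<Longrightarrow> gv i < n" "inj_on gv {..<n}" "\<And>i. i < n \<Longrightarrow> G (vert i) = vert (gv i)"
    using rotation_or_reflection_permutes_vertices[OF assms(13) \<open>d < n\<close>] by blast
  then interpret linear_taft_action n lam r m G X gv
    using assms(10,11) \<open>lam \<noteq> 0\<close> by unfold_locales auto
  show ?thesis
    unfolding descends_iff_omega
    using G_omega_in_OmegaIdeal_iff[OF assms(13) _ \<open>d < n\<close>] X_omega_in_OmegaIdeal_iff by blast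
qed

end
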